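(* Let $k,m,n$ be positive integers with $m\le n(n+1)/2$. Let $\mathcal{C}$ be any algorithm that, given an $m\times n$ matrix $A$ whose entries are $O(k)$-bit integers, produces a data structure (bit string) $\mathcal{C}(A)$ from which, independently of $A$, the value $\mu_A(J)$ can be evaluated for every $J\in\mathbb{I}_n$. Then $\mathcal{C}(A)$ needs $\Omega(km)$ bits of space (i.e. in the worst case over such matrices $A$, $\mathcal{C}(A)$ has at least $c\,km$ bits for an absolute constant $c>0$).
   Context: For integers $i\le j$, $[i:j]=\{i,\dots,j\}$; $\mathbb{I}_n=\{[i:j]:1\le i\le j\le n\}$. For a matrix $A=[a_{ij}]$ with $n$ columns, $\mu_A:\mathbb{I}_n\to\mathbb{R}$ is $\mu_A(J)=\max_{k'\ge1}\sum_{i=1}^{k'}\sum_{j\in J}a_{ij}$, the maximum over row indices $k'$. *)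

theory Defs
  imports Complex_Main
begin

text \<open>An m x n integer matrix is represented as a function on indices (rows 1..m,
  columns 1..n); entries outside this range are required to be 0 so that
  distinct functions correspond to distinct matrices.\<close>

definition int_matrix_bits :: "nat \<Rightarrow> nat \<Rightarrow> nat \<Rightarrow> (nat \<Rightarrow> nat \<Rightarrow> int) set" where
  "int_matrix_bits b m n = {A. (\<forall>i j. (i < 1 \<or> i > m \<or> j < 1 \<or> j > n) \<longrightarrow> A i j = 0)
                             \<and> (\<forall>i j. \<bar>A i j\<bar> < 2 ^ b)}"

definition mu :: "nat \<Rightarrow> (nat \<Rightarrow> nat \<Rightarrow> int) \<Rightarrow> nat \<Rightarrow> nat \<Rightarrow> int" where
  "mu m A i j = Max ((\<lambda>k'. \<Sum>r = 1..k'. \<Sum>c = i..j. A r c) ` {1..m})"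

end

theory Submission
  imports Defs "HOL-Library.FuncSet"
begin

text \<open>Any table F of integers with F 0 = 0 arises as the table of interval sums
  F K j - F K (i-1) of its second difference matrix, so \<mu> takes the maximum of these
  differences over the rows K. Injectively label each row r by an interval p r and put into
  row r of F a dip of depth 2^k just left of p r and a k-bit payload f r at its right end.
  Then \<mu>(p r) = 2^k + f r, because every other row contributes at most 2^k to that
  interval. Hence \<mu> determines all m payloads, and the 2^(km) resulting matrices need
  pairwise distinct encodings, one of which has at least km bits.\<close>

lemma card_bool_lists_shorter:
  "finite {xs :: bool list. length xs < N} \<and> card {xs :: bool list. length xs < N} < 2 ^ N"
proof (induction N)
  case 0
  then show ?case by simp
next
  case (Suc N)
  let ?eq = "{xs :: bool list. set xs \<subseteq> UNIV \<and> length xs = N}"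
  have split: "{xs :: bool list. length xs < Suc N} = {xs. length xs < N} \<union> ?eq"
    by auto
  have "finite ?eq" "card ?eq = 2 ^ N"
    using finite_lists_length_eq[of "UNIV :: bool set" N] card_lists_length_eq[of "UNIV :: bool set" N]
    by simp_all
  then show ?case
    using Suc card_Un_le[of "{xs :: bool list. length xs < N}" ?eq] unfolding split by auto
qed

lemma ex_long_bool_list:
  assumes "2 ^ N \<le> card (S :: bool list set)"
  shows "\<exists>xs\<in>S. N \<le> length xs"
proof (rule ccontr)
  assume "\<not> ?thesis"
  then have "S \<subseteq> {xs. length xs < N}" by auto
  then have "card S \<le> card {xs :: bool list. length xs < N}"
    using card_bool_lists_shorter card_mono by blast
  with assms card_bool_lists_shorter[of N] show False by simp
qed

definition intervals :: "nat \<Rightarrow> (nat \<times> nat) set" where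
  "intervals n = {(i, j). 1 \<le> i \<and> i \<le> j \<and> j \<le> n}"

lemma finite_intervals: "finite (intervals n)"
  by (rule finite_subset[of _ "{1..n} \<times> {1..n}"]) (auto simp: intervals_def)

lemma card_intervals: "2 * card (intervals n) = n * (n + 1)"
proof (induction n)
  case 0
  have "intervals 0 = {}" by (auto simp: intervals_def)
  then show ?case by simp
next
  case (Suc n)
  let ?new = "(\<lambda>i. (i, Suc n)) ` {1..Suc n}"
  have "intervals (Suc n) = intervals n \<union> ?new" "intervals n \<inter> ?new = {}"
    by (auto simp: intervals_def)
  moreover have "card ?new = Suc n"
    by (subst card_image) (auto simp: inj_on_def)
  ultimately have "card (intervals (Suc n)) = card (intervals n) + Suc n"
    using finite_intervals by (simp add: card_Un_disjoint)
  with Suc show ?case by simp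
qed

lemma ex_inj_into_intervals:
  assumes "2 * m \<le> n * (n + 1)"
  obtains p where "inj_on p {1..m}" "p ` {1..m} \<subseteq> intervals n"
  using card_le_inj[OF _ finite_intervals, of "{1..m}" n] assms card_intervals[of n] by auto

lemma sum_telescope_pred:
  fixes g :: "nat \<Rightarrow> 'a :: ab_group_add"
  assumes "1 \<le> i" "i \<le> Suc j"
  shows "(\<Sum>c = i..j. g c - g (c - 1)) = g j - g (i - 1)"
  using assms
proof (induction j)
  case (Suc j)
  then show ?case by (cases "i = Suc (Suc j)") (auto simp: sum.cl_ivl_Suc)
qed simp

definition second_difference :: "(nat \<Rightarrow> nat \<Rightarrow> int) \<Rightarrow> nat \<Rightarrow> nat \<Rightarrow> int" where
  "second_difference F r c = F r c - F r (c - 1) - F (r - 1) c + F (r - 1) (c - 1)"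

definition difference_matrix :: "nat \<Rightarrow> nat \<Rightarrow> (nat \<Rightarrow> nat \<Rightarrow> int) \<Rightarrow> nat \<Rightarrow> nat \<Rightarrow> int" where
  "difference_matrix m n F r c =
     (if 1 \<le> r \<and> r \<le> m \<and> 1 \<le> c \<and> c \<le> n then second_difference F r c else 0)"

lemma sum_difference_matrix:
  assumes "K \<le> m" "1 \<le> i" "i \<le> j" "j \<le> n"
  shows "(\<Sum>r = 1..K. \<Sum>c = i..j. difference_matrix m n F r c)
           = (F K j - F K (i - 1)) - (F 0 j - F 0 (i - 1))"
proof -
  let ?H = "\<lambda>r. F r j - F r (i - 1)"
  have row: "(\<Sum>c = i..j. difference_matrix m n F r c) = ?H r - ?H (r - 1)"
    if "r \<in> {1..K}" for r
  proof -
    have "(\<Sum>c = i..j. difference_matrix m n F r c)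
            = (\<Sum>c = i..j. F r c - F r (c - 1)) - (\<Sum>c = i..j. F (r - 1) c - F (r - 1) (c - 1))"
      unfolding sum_subtractf[symmetric] using that assms
      by (intro sum.cong) (auto simp: difference_matrix_def second_difference_def)
    then show ?thesis
      using assms sum_telescope_pred[of i j "F r"] sum_telescope_pred[of i j "F (r - 1)"] by simp
  qed
  have "(\<Sum>r = 1..K. \<Sum>c = i..j. difference_matrix m n F r c) = (\<Sum>r = 1..K. ?H r - ?H (r - 1))"
    using row by (rule sum.cong[OF refl])
  also have "\<dots> = ?H K - ?H 0"
    using sum_telescope_pred[of 1 K ?H] by simp
  finally show ?thesis .
qed

lemma mu_difference_matrix:
  assumes "\<forall>w. F 0 w = 0" "1 \<le> i" "i \<le> j" "j \<le> n"
  shows "mu m (difference_matrix m n F) i j = Max ((\<lambda>K. F K j - F K (i - 1)) ` {1..m})"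
  unfolding mu_def using assms sum_difference_matrix[of _ m i j n F]
  by (intro arg_cong[where f = Max] image_cong) auto

lemma difference_matrix_in_int_matrix_bits:
  assumes "\<forall>r \<le> m. \<forall>w. \<bar>F r w\<bar> \<le> M" "4 * M < 2 ^ b"
  shows "difference_matrix m n F \<in> int_matrix_bits b m n"
proof -
  have "\<bar>second_difference F r c\<bar> < 2 ^ b" if "r \<le> m" for r c
  proof -
    have "\<bar>F r c\<bar> \<le> M" "\<bar>F r (c - 1)\<bar> \<le> M" "\<bar>F (r - 1) c\<bar> \<le> M"
      "\<bar>F (r - 1) (c - 1)\<bar> \<le> M"
      using assms(1) that by auto
    then show ?thesis
      using assms(2) unfolding second_difference_def abs_le_iff abs_less_iff by linarith
  qed
  then show ?thesis
    by (auto simp: int_matrix_bits_def difference_matrix_def)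
qed

text \<open>The dip of depth 2^k just left of p r makes p r the only interval on which
  row r contributes more than 2^k to \<mu>.\<close>

definition peak_table :: "nat \<Rightarrow> (nat \<Rightarrow> nat \<times> nat) \<Rightarrow> (nat \<Rightarrow> nat) \<Rightarrow> nat \<Rightarrow> nat \<Rightarrow> int" where
  "peak_table k p f r w =
     (if r = 0 then 0
      else if w = snd (p r) then int (f r)
      else if w = fst (p r) - 1 then - (2 ^ k)
      else 0)"

lemma abs_peak_table_le:
  assumes "\<forall>r\<in>{1..m}. f r < 2 ^ k" "r \<le> m"
  shows "\<bar>peak_table k p f r w\<bar> \<le> 2 ^ k"
proof (cases "r = 0")
  case False
  then have "int (f r) < 2 ^ k"
    using assms by (metis atLeastAtMost_iff less_one not_le of_nat_less_iff of_nat_numeral of_nat_power)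
  then show ?thesis by (simp add: peak_table_def)
qed (simp add: peak_table_def)

lemma peak_table_diff_at_peak:
  assumes "r \<noteq> 0" "p r \<in> intervals n"
  shows "peak_table k p f r (snd (p r)) - peak_table k p f r (fst (p r) - 1) = 2 ^ k + int (f r)"
  using assms by (auto simp: peak_table_def intervals_def)

lemma peak_table_diff_off_peak:
  assumes "p r \<in> intervals n" "1 \<le> i" "i \<le> j" "(i, j) \<noteq> p r" "f r < 2 ^ k"
  shows "peak_table k p f r j - peak_table k p f r (i - 1) \<le> 2 ^ k"
proof -
  have "int (f r) < 2 ^ k"
    using assms(5) by (metis of_nat_less_iff of_nat_numeral of_nat_power)
  moreover have "- int (f r) \<le> 2 ^ k"
    by (rule order.trans[of _ 0]) simp_all
  ultimately show ?thesis
    using assms(1-4) by (cases "p r") (auto simp: peak_table_def intervals_def)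
qed

lemma mu_peak_matrix:
  assumes inj: "inj_on p {1..m}" and into: "p ` {1..m} \<subseteq> intervals n"
    and payload: "\<forall>r\<in>{1..m}. f r < 2 ^ k" and r0: "r0 \<in> {1..m}"
  shows "mu m (difference_matrix m n (peak_table k p f)) (fst (p r0)) (snd (p r0))
           = 2 ^ k + int (f r0)"
proof -
  obtain i j where ij: "p r0 = (i, j)" by force
  have "p r0 \<in> intervals n" using into r0 by blast
  then have bounds: "1 \<le> i" "i \<le> j" "j \<le> n" using ij by (auto simp: intervals_def)
  let ?D = "\<lambda>K. peak_table k p f K j - peak_table k p f K (i - 1)"
  have "Max (?D ` {1..m}) = 2 ^ k + int (f r0)"
  proof (rule Max_eqI)
    show "2 ^ k + int (f r0) \<in> ?D ` {1..m}"
      using r0 ij peak_table_diff_at_peak[of r0 p n k f] \<open>p r0 \<in> intervals n\<close> by force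
  next
    fix y assume "y \<in> ?D ` {1..m}"
    then obtain K where K: "K \<in> {1..m}" "y = ?D K" by auto
    show "y \<le> 2 ^ k + int (f r0)"
    proof (cases "K = r0")
      case True
      then show ?thesis
        using K ij peak_table_diff_at_peak[of r0 p n k f] \<open>p r0 \<in> intervals n\<close> by simp
    next
      case False
      then have "(i, j) \<noteq> p K" using inj K r0 ij by (metis inj_onD)
      moreover have "p K \<in> intervals n" using into K by blast
      ultimately have "y \<le> 2 ^ k"
        using K payload bounds peak_table_diff_off_peak[of p K n i j f k] by auto
      then show ?thesis by simp
    qed
  qed simp
  then show ?thesis
    using mu_difference_matrix[of "peak_table k p f" i j n m] bounds ij
    by (simp add: peak_table_def)
qed

lemma peak_matrix_in_int_matrix_bits:
  assumes "k \<ge> 1" "\<forall>r\<in>{1..m}. f r < 2 ^ k"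
  shows "difference_matrix m n (peak_table k p f) \<in> int_matrix_bits (4 * k) m n"
proof (rule difference_matrix_in_int_matrix_bits)
  show "\<forall>r \<le> m. \<forall>w. \<bar>peak_table k p f r w\<bar> \<le> 2 ^ k"
    using abs_peak_table_le[OF assms(2)] by blast
  have "(2 :: int) ^ (k + 2) < 2 ^ (4 * k)"
    using assms(1) by (intro power_strict_increasing) auto
  then show "4 * 2 ^ k < (2 :: int) ^ (4 * k)"
    by (simp add: power_add)
qed

lemma inj_on_encode_peak_matrix:
  assumes "k \<ge> 1" and inj: "inj_on p {1..m}" and into: "p ` {1..m} \<subseteq> intervals n"
    and decodes: "\<forall>A \<in> int_matrix_bits (4 * k) m n. \<forall>i j. 1 \<le> i \<longrightarrow> i \<le> j \<longrightarrow> j \<le> n \<longrightarrow>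
                    dec (enc A) i j = mu m A i j"
  shows "inj_on (\<lambda>f. enc (difference_matrix m n (peak_table k p f))) (\<Pi>\<^sub>E r\<in>{1..m}. {..<2 ^ k})"
proof (rule inj_onI)
  fix f g
  assume f: "f \<in> (\<Pi>\<^sub>E r\<in>{1..m}. {..<2 ^ k})" and g: "g \<in> (\<Pi>\<^sub>E r\<in>{1..m}. {..<2 ^ k})"
    and same: "enc (difference_matrix m n (peak_table k p f)) = enc (difference_matrix m n (peak_table k p g))"
  have decoded: "dec (enc (difference_matrix m n (peak_table k p h))) (fst (p r)) (snd (p r))
                   = 2 ^ k + int (h r)"
    if "h \<in> (\<Pi>\<^sub>E r\<in>{1..m}. {..<2 ^ k})" "r \<in> {1..m}" for h r
  proof -
    have payload: "\<forall>r\<in>{1..m}. h r < 2 ^ k" using that(1) by auto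
    have "p r \<in> intervals n" using into that(2) by blast
    then have "1 \<le> fst (p r)" "fst (p r) \<le> snd (p r)" "snd (p r) \<le> n"
      by (cases "p r"; simp add: intervals_def)+
    then have "dec (enc (difference_matrix m n (peak_table k p h))) (fst (p r)) (snd (p r))
                 = mu m (difference_matrix m n (peak_table k p h)) (fst (p r)) (snd (p r))"
      using decodes peak_matrix_in_int_matrix_bits[OF \<open>k \<ge> 1\<close> payload] by blast
    then show ?thesis
      using mu_peak_matrix[OF inj into payload that(2)] by simp
  qed
  show "f = g"
  proof (rule PiE_ext[OF f g])
    fix r assume "r \<in> {1..m}"
    then show "f r = g r" using decoded[OF f] decoded[OF g] same by simp
  qed
qed

lemma ex_long_encoding:
  fixes enc :: "(nat \<Rightarrow> nat \<Rightarrow> int) \<Rightarrow> bool list"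
  assumes k: "k \<ge> 1" and mn: "2 * m \<le> n * (n + 1)"
    and decodes: "\<forall>A \<in> int_matrix_bits (4 * k) m n. \<forall>i j. 1 \<le> i \<longrightarrow> i \<le> j \<longrightarrow> j \<le> n \<longrightarrow>
                    dec (enc A) i j = mu m A i j"
  shows "\<exists>A \<in> int_matrix_bits (4 * k) m n. k * m \<le> length (enc A)"
proof -
  obtain p where inj: "inj_on p {1..m}" and into: "p ` {1..m} \<subseteq> intervals n"
    using ex_inj_into_intervals[OF mn] .
  let ?P = "\<Pi>\<^sub>E r\<in>{1..m}. {..<(2::nat) ^ k}"
  let ?A = "\<lambda>f. difference_matrix m n (peak_table k p f)"
  have "card ((\<lambda>f. enc (?A f)) ` ?P) = 2 ^ (k * m)"
    using card_image[OF inj_on_encode_peak_matrix[OF k inj into decodes]]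
    by (simp add: card_PiE power_mult)
  then obtain xs where "xs \<in> (\<lambda>f. enc (?A f)) ` ?P" "k * m \<le> length xs"
    using ex_long_bool_list[of "k * m" "(\<lambda>f. enc (?A f)) ` ?P"] by auto
  then obtain f where "f \<in> ?P" "k * m \<le> length (enc (?A f))"
    by blast
  moreover have "\<forall>r\<in>{1..m}. f r < 2 ^ k"
    using \<open>f \<in> ?P\<close> by auto
  ultimately show ?thesis
    using peak_matrix_in_int_matrix_bits[OF k] by blast
qed

theorem lemma6p6:
  shows "\<exists>c::real. c > 0 \<and> (\<exists>C::nat. \<forall>k m n :: nat.
           \<forall>(enc :: (nat \<Rightarrow> nat \<Rightarrow> int) \<Rightarrow> bool list) (dec :: bool list \<Rightarrow> nat \<Rightarrow> nat \<Rightarrow> int).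
             k \<ge> 1 \<longrightarrow> m \<ge> 1 \<longrightarrow> n \<ge> 1 \<longrightarrow> 2 * m \<le> n * (n + 1) \<longrightarrow>
             (\<forall>A \<in> int_matrix_bits (C * k) m n. \<forall>i j. 1 \<le> i \<longrightarrow> i \<le> j \<longrightarrow> j \<le> n \<longrightarrow>
                 dec (enc A) i j = mu m A i j) \<longrightarrow>
             (\<exists>A \<in> int_matrix_bits (C * k) m n. real (length (enc A)) \<ge> c * real k * real m))"
proof (intro exI[of _ "1 :: real"] exI[of _ "4 :: nat"] conjI allI impI)
  fix k m n :: nat and enc :: "(nat \<Rightarrow> nat \<Rightarrow> int) \<Rightarrow> bool list" and dec
  assume "k \<ge> 1" "2 * m \<le> n * (n + 1)"
    "\<forall>A \<in> int_matrix_bits (4 * k) m n. \<forall>i j. 1 \<le> i \<longrightarrow> i \<le> j \<longrightarrow> j \<le> n \<longrightarrow>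
       dec (enc A) i j = mu m A i j"
  then obtain A where "A \<in> int_matrix_bits (4 * k) m n" "k * m \<le> length (enc A)"
    using ex_long_encoding by blast
  moreover from \<open>k * m \<le> length (enc A)\<close> have "1 * real k * real m \<le> real (length (enc A))"
    by (metis mult_1 of_nat_le_iff of_nat_mult)
  ultimately show "\<exists>A \<in> int_matrix_bits (4 * k) m n. 1 * real k * real m \<le> real (length (enc A))"
    by blast
qed simp

end
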